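(* For every digraph $X$ on vertex set $V$, $u_X(-m)=(-1)^{|V|}u_{\overline{X}}(m)$ as polynomials in $m$.
   Context: A digraph $X=(V,E)$: $V$ finite, $E\subset\{(u,v)\in V\times V\mid u\ne v\}$; $\overline{X}=(V,E^c)$ with $(u,v)\in E^c$ iff $u\ne v$, $(u,v)\notin E$. $\Sigma_V$ is the set of bijections $\sigma:[n]\to V$ ($n=|V|$), $X\mathrm{Des}(\sigma)=\{i\in[n-1]\mid(\sigma_i,\sigma_{i+1})\in E\}$; $F_I=\sum x_{i_1}\cdots x_{i_n}$ over $1\le i_1\le\cdots\le i_n$ with $i_j<i_{j+1}$ for $j\in I$; $U_X=\sum_{\sigma\in\Sigma_V}F_{X\mathrm{Des}(\sigma)}$; the Redei–Berge polynomial $u_X(m)$ is the polynomial in $m$ given by $U_X(1,\dots,1,0,\dots)$ with $m$ ones. *)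

theory Defs
  imports "HOL-Library.FuncSet" "HOL-Computational_Algebra.Polynomial"
begin

definition digraph :: "'a set \<Rightarrow> ('a \<times> 'a) set \<Rightarrow> bool" where
  "digraph V E \<longleftrightarrow> finite V \<and> E \<subseteq> {(u,v). u \<in> V \<and> v \<in> V \<and> u \<noteq> v}"

definition compl_edges :: "'a set \<Rightarrow> ('a \<times> 'a) set \<Rightarrow> ('a \<times> 'a) set" where
  "compl_edges V E = {(u,v). u \<in> V \<and> v \<in> V \<and> u \<noteq> v \<and> (u,v) \<notin> E}"

text \<open>Bijections sigma : [n] -> V, represented as lists [sigma_1, ..., sigma_n].\<close>
definition vertex_orders :: "'a set \<Rightarrow> 'a list set" where
  "vertex_orders V = {xs. distinct xs \<and> set xs = V}"

text \<open>X-descent set: i in [n-1] with (sigma_i, sigma_(i+1)) in E (1-based).\<close>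
definition XDes :: "('a \<times> 'a) set \<Rightarrow> 'a list \<Rightarrow> nat set" where
  "XDes E xs = {i \<in> {1..<length xs}. (xs ! (i - 1), xs ! i) \<in> E}"

text \<open>F_I(1,...,1,0,...) with m ones: number of sequences
  1 <= i_1 <= ... <= i_n <= m with i_j < i_(j+1) for j in I.\<close>
definition F_spec :: "nat \<Rightarrow> nat set \<Rightarrow> nat \<Rightarrow> nat" where
  "F_spec n I m = card {i \<in> {1..n} \<rightarrow>\<^sub>E {1..m}.
      \<forall>j \<in> {1..<n}. i j \<le> i (Suc j) \<and> (j \<in> I \<longrightarrow> i j < i (Suc j))}"

definition U_spec :: "'a set \<Rightarrow> ('a \<times> 'a) set \<Rightarrow> nat \<Rightarrow> nat" where
  "U_spec V E m = (\<Sum>xs \<in> vertex_orders V. F_spec (card V) (XDes E xs) m)"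

definition redei_berge :: "'a set \<Rightarrow> ('a \<times> 'a) set \<Rightarrow> rat poly" where
  "redei_berge V E = (THE p. \<forall>m::nat. poly p (of_nat m) = of_nat (U_spec V E m))"

end

theory Submission
  imports Defs
begin

text \<open>
  Lift each weak inequality \<open>i\<^sub>j \<le> i\<^sub>j\<^sub>+\<^sub>1\<close> (\<open>j \<notin> I\<close>) to a strict one by adding
  to \<open>i\<^sub>j\<close> the number of weak steps before \<open>j\<close>; this turns the sequences counted
  by \<open>F\<^sub>I(1\<^sup>m)\<close> into strictly increasing sequences in \<open>[m + a]\<close>, where \<open>a\<close> is the
  number of weak steps, so \<open>F\<^sub>I(1\<^sup>m) = C(m + a, n)\<close>. Hence \<open>u\<^sub>X\<close> is a sum of the
  polynomials \<open>C(x + a\<^sub>\<sigma>, n)\<close>. Negating the upper argument gives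
  \<open>C(-x + a, n) = (-1)\<^sup>n C(x + n - 1 - a, n)\<close>, and passing to the complement
  digraph turns the descents of every \<open>\<sigma>\<close> into its ascents, i.e.\ replaces
  \<open>a\<^sub>\<sigma>\<close> by \<open>n - 1 - a\<^sub>\<sigma>\<close>.
\<close>

definition increasing_lists :: "nat \<Rightarrow> 'a::linorder set \<Rightarrow> 'a list set" where
  "increasing_lists n A = {xs. sorted_wrt (<) xs \<and> length xs = n \<and> set xs \<subseteq> A}"

lemma card_increasing_lists:
  assumes "finite A"
  shows "card (increasing_lists n A) = card A choose n"
proof -
  have "bij_betw set (increasing_lists n A) {B. B \<subseteq> A \<and> card B = n}"
  proof (rule bij_betw_byWitness[where f' = sorted_list_of_set])
    show "\<forall>xs \<in> increasing_lists n A. sorted_list_of_set (set xs) = xs"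
      by (auto simp: increasing_lists_def sorted_list_of_set.idem_if_sorted_distinct strict_sorted_iff)
    show "\<forall>B \<in> {B. B \<subseteq> A \<and> card B = n}. set (sorted_list_of_set B) = B"
      using assms by (metis (mono_tags) finite_subset mem_Collect_eq set_sorted_list_of_set)
    show "set ` increasing_lists n A \<subseteq> {B. B \<subseteq> A \<and> card B = n}"
      by (auto simp: increasing_lists_def strict_sorted_iff distinct_card)
    show "sorted_list_of_set ` {B. B \<subseteq> A \<and> card B = n} \<subseteq> increasing_lists n A"
    proof
      fix xs assume "xs \<in> sorted_list_of_set ` {B. B \<subseteq> A \<and> card B = n}"
      then obtain B where "B \<subseteq> A" "card B = n" "xs = sorted_list_of_set B"
        by auto
      moreover have "finite B"
        using assms \<open>B \<subseteq> A\<close> finite_subset by blast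
      ultimately show "xs \<in> increasing_lists n A"
        by (simp add: increasing_lists_def)
    qed
  qed
  then show ?thesis
    using bij_betw_same_card n_subsets[OF assms] by metis
qed

lemma sorted_wrt_less_nth_diff:
  assumes "sorted_wrt (<) (xs :: nat list)" "a \<le> b" "b < length xs"
  shows "xs ! a + (b - a) \<le> xs ! b"
  using assms(2,3)
proof (induction b rule: dec_induct)
  case (step b)
  then have "xs ! b < xs ! Suc b"
    using sorted_wrt_nth_less[OF assms(1)] by auto
  with step show ?case by auto
qed simp

lemma increasing_lists_nth_bounds:
  assumes "xs \<in> increasing_lists n {1..N}" "t < n"
  shows "Suc t \<le> xs ! t" "xs ! t + (n - Suc t) \<le> N"
proof -
  have xs: "sorted_wrt (<) xs" "length xs = n" "set xs \<subseteq> {1..N}"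
    using assms(1) by (auto simp: increasing_lists_def)
  then have "xs ! 0 \<in> set xs" "xs ! (n - 1) \<in> set xs"
    using assms(2) by (auto intro!: nth_mem)
  then have "xs ! 0 \<in> {1..N}" "xs ! (n - 1) \<in> {1..N}"
    using xs(3) by blast+
  moreover have "xs ! 0 + t \<le> xs ! t" "xs ! t + (n - 1 - t) \<le> xs ! (n - 1)"
    using assms(2) xs(2) sorted_wrt_less_nth_diff[OF xs(1), of 0 t]
      sorted_wrt_less_nth_diff[OF xs(1), of t "n - 1"]
    by auto
  ultimately show "Suc t \<le> xs ! t" "xs ! t + (n - Suc t) \<le> N"
    by auto
qed

definition compatible_seqs :: "nat \<Rightarrow> nat set \<Rightarrow> nat \<Rightarrow> (nat \<Rightarrow> nat) set" where
  "compatible_seqs n I m = {i \<in> {1..n} \<rightarrow>\<^sub>E {1..m}.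
      \<forall>j \<in> {1..<n}. i j \<le> i (Suc j) \<and> (j \<in> I \<longrightarrow> i j < i (Suc j))}"

definition weak_count :: "nat set \<Rightarrow> nat \<Rightarrow> nat" where
  "weak_count I j = card ({1..<j} - I)"

lemma weak_count_Suc:
  "1 \<le> j \<Longrightarrow> weak_count I (Suc j) = weak_count I j + (if j \<in> I then 0 else 1)"
proof -
  assume "1 \<le> j"
  then have "{1..<Suc j} - I = (if j \<in> I then {1..<j} - I else insert j ({1..<j} - I))"
    by (auto simp: less_Suc_eq)
  then show ?thesis
    by (simp add: weak_count_def card_insert_if)
qed

lemma weak_count_le: "weak_count I j \<le> j - 1"
  using card_mono[of "{1..<j}" "{1..<j} - I"] by (simp add: weak_count_def)

lemma weak_count_mono: "j \<le> k \<Longrightarrow> weak_count I j \<le> weak_count I k"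
  unfolding weak_count_def by (intro card_mono) auto

lemma weak_count_diff:
  assumes "1 \<le> j" "j \<le> k"
  shows "weak_count I k \<le> weak_count I j + (k - j)"
  using assms(2)
proof (induction k rule: dec_induct)
  case (step k)
  then show ?case using assms(1) weak_count_Suc[of k I] by auto
qed simp

lemma weak_count_complement:
  assumes "D \<subseteq> {1..<n}"
  shows "weak_count ({1..<n} - D) n = card D" "weak_count D n + card D = n - 1"
proof -
  have "{1..<n} - ({1..<n} - D) = D"
    using assms by auto
  then show "weak_count ({1..<n} - D) n = card D"
    by (simp add: weak_count_def)
  have "card ({1..<n} - D) = card {1..<n} - card D"
    using assms by (intro card_Diff_subset) (auto intro: finite_subset)
  moreover have "card D \<le> card {1..<n}"
    using assms by (intro card_mono) auto
  ultimately show "weak_count D n + card D = n - 1"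
    by (simp add: weak_count_def)
qed

definition spread :: "nat set \<Rightarrow> nat \<Rightarrow> (nat \<Rightarrow> nat) \<Rightarrow> nat list" where
  "spread I n i = map (\<lambda>j. i j + weak_count I j) [1..<Suc n]"

definition unspread :: "nat set \<Rightarrow> nat \<Rightarrow> nat list \<Rightarrow> nat \<Rightarrow> nat" where
  "unspread I n xs = (\<lambda>j. if j \<in> {1..n} then xs ! (j - 1) - weak_count I j else undefined)"

lemma length_spread [simp]: "length (spread I n i) = n"
  by (simp add: spread_def)

lemma nth_spread: "t < n \<Longrightarrow> spread I n i ! t = i (Suc t) + weak_count I (Suc t)"
  unfolding spread_def by (subst nth_map_upt) auto

lemma set_spread: "set (spread I n i) = (\<lambda>j. i j + weak_count I j) ` {1..n}"
  by (simp only: spread_def set_map set_upt atLeastLessThanSuc_atLeastAtMost)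

lemma spread_mem_increasing_lists:
  assumes i: "i \<in> compatible_seqs n I m"
  shows "spread I n i \<in> increasing_lists n {1..m + weak_count I n}"
proof -
  have "spread I n i ! t < spread I n i ! Suc t" if "Suc t < n" for t
  proof -
    have "i (Suc t) \<le> i (Suc (Suc t)) \<and> (Suc t \<in> I \<longrightarrow> i (Suc t) < i (Suc (Suc t)))"
      using i that by (auto simp: compatible_seqs_def)
    then show ?thesis
      using that by (simp add: nth_spread weak_count_Suc)
  qed
  then have "sorted_wrt (<) (spread I n i)"
    by (simp add: sorted_wrt_iff_nth_Suc_transp)
  moreover have "set (spread I n i) \<subseteq> {1..m + weak_count I n}"
  proof
    fix y assume "y \<in> set (spread I n i)"
    then obtain j where j: "j \<in> {1..n}" "y = i j + weak_count I j"
      by (auto simp: set_spread)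
    moreover have "i j \<in> {1..m}"
      using i j(1) by (auto simp: compatible_seqs_def)
    ultimately show "y \<in> {1..m + weak_count I n}"
      using weak_count_mono[of j n I] by auto
  qed
  ultimately show ?thesis
    by (simp add: increasing_lists_def)
qed

lemma unspread_mem_compatible_seqs:
  assumes xs: "xs \<in> increasing_lists n {1..m + weak_count I n}"
  shows "unspread I n xs \<in> compatible_seqs n I m"
proof -
  have "unspread I n xs \<in> {1..n} \<rightarrow>\<^sub>E {1..m}"
  proof (rule PiE_I)
    fix j assume j: "j \<in> {1..n}"
    then have "j \<le> xs ! (j - 1)" "xs ! (j - 1) + (n - j) \<le> m + weak_count I n"
      using increasing_lists_nth_bounds[OF xs, of "j - 1"] by auto
    moreover have "weak_count I j \<le> j - 1" "weak_count I n \<le> weak_count I j + (n - j)"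
      using j weak_count_le weak_count_diff by auto
    ultimately show "unspread I n xs j \<in> {1..m}"
      using j by (auto simp: unspread_def)
  qed (auto simp: unspread_def)
  moreover have "unspread I n xs j \<le> unspread I n xs (Suc j) \<and>
      (j \<in> I \<longrightarrow> unspread I n xs j < unspread I n xs (Suc j))" if j: "j \<in> {1..<n}" for j
  proof -
    have "xs ! (j - 1) < xs ! j"
      using xs j by (intro sorted_wrt_nth_less[of "(<)"]) (auto simp: increasing_lists_def)
    moreover have "j \<le> xs ! (j - 1)"
      using increasing_lists_nth_bounds(1)[OF xs, of "j - 1"] j by auto
    ultimately show ?thesis
      using j weak_count_le[of I j] by (auto simp: unspread_def weak_count_Suc)
  qed
  ultimately show ?thesis
    by (simp add: compatible_seqs_def)
qed

lemma unspread_spread: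
  assumes "i \<in> compatible_seqs n I m"
  shows "unspread I n (spread I n i) = i"
proof
  fix j
  have "i \<in> extensional {1..n}"
    using assms by (auto simp: compatible_seqs_def PiE_def)
  then show "unspread I n (spread I n i) j = i j"
    by (cases "j \<in> {1..n}") (auto simp: unspread_def nth_spread extensional_def)
qed

lemma spread_unspread:
  assumes xs: "xs \<in> increasing_lists n {1..N}"
  shows "spread I n (unspread I n xs) = xs"
proof (rule nth_equalityI)
  show "length (spread I n (unspread I n xs)) = length xs"
    using xs by (simp add: increasing_lists_def)
  fix t assume "t < length (spread I n (unspread I n xs))"
  then have t: "t < n" by simp
  then show "spread I n (unspread I n xs) ! t = xs ! t"
    using increasing_lists_nth_bounds(1)[OF xs t] weak_count_le[of I "Suc t"]
    by (simp add: nth_spread unspread_def)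
qed

lemma F_spec_eq_binomial: "F_spec n I m = (m + weak_count I n) choose n"
proof -
  have bij: "bij_betw (spread I n) (compatible_seqs n I m) (increasing_lists n {1..m + weak_count I n})"
    by (rule bij_betw_byWitness[where f' = "unspread I n"])
      (use unspread_spread spread_unspread spread_mem_increasing_lists
        unspread_mem_compatible_seqs in blast)+
  have "F_spec n I m = card (compatible_seqs n I m)"
    by (simp only: F_spec_def compatible_seqs_def)
  also have "\<dots> = card (increasing_lists n {1..m + weak_count I n})"
    using bij by (rule bij_betw_same_card)
  also have "\<dots> = (m + weak_count I n) choose n"
    by (simp add: card_increasing_lists)
  finally show ?thesis .
qed

definition shifted_binomial_poly :: "nat \<Rightarrow> nat \<Rightarrow> 'a::field_char_0 poly" where
  "shifted_binomial_poly n c = smult (1 / fact n) (\<Prod>k<n. [:of_nat c - of_nat k, 1:])"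

lemma poly_shifted_binomial_poly:
  "poly (shifted_binomial_poly n c) x = (x + of_nat c) gchoose n"
  by (simp add: shifted_binomial_poly_def poly_prod gbinomial_prod_rev atLeast0LessThan algebra_simps)

lemma poly_shifted_binomial_poly_of_nat:
  "poly (shifted_binomial_poly n c) (of_nat m) = (of_nat ((m + c) choose n) :: 'a::field_char_0)"
  by (simp add: poly_shifted_binomial_poly binomial_gbinomial)

lemma shifted_binomial_poly_reflect:
  assumes "c + c' = n - 1"
  shows "pcompose (shifted_binomial_poly n c) [:0, -1:]
           = smult ((-1) ^ n) (shifted_binomial_poly n c' :: 'a::field_char_0 poly)"
proof -
  have "(- x + of_nat c) gchoose n = (-1) ^ n * ((x + of_nat c') gchoose n)" for x :: 'a
  proof (cases n)
    case (Suc k)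
    moreover have "of_nat c + of_nat c' = (of_nat k :: 'a)"
      using assms Suc by (metis diff_Suc_1 of_nat_add)
    ultimately have upper: "of_nat n - (- x + of_nat c) - 1 = x + (of_nat c' :: 'a)"
      by (simp add: algebra_simps)
    show ?thesis
      by (subst gbinomial_negated_upper) (simp only: upper)
  qed simp
  then show ?thesis
    by (intro poly_eq_poly_eq_iff[THEN iffD1] ext)
      (simp add: poly_pcompose poly_shifted_binomial_poly)
qed

lemma poly_eq_if_eq_on_nats:
  fixes p q :: "'a::{idom, ring_char_0} poly"
  assumes "\<And>m::nat. poly p (of_nat m) = poly q (of_nat m)"
  shows "p = q"
proof (rule ccontr)
  assume "p \<noteq> q"
  then have "finite {x. poly (p - q) x = 0}"
    by (intro poly_roots_finite) simp
  moreover have "range (of_nat :: nat \<Rightarrow> 'a) \<subseteq> {x. poly (p - q) x = 0}"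
    using assms by auto
  ultimately show False
    using range_inj_infinite[OF inj_of_nat] finite_subset by blast
qed

lemma redei_berge_eq_sum:
  assumes "finite V"
  shows "redei_berge V E
           = (\<Sum>xs \<in> vertex_orders V. shifted_binomial_poly (card V) (weak_count (XDes E xs) (card V)))"
    (is "_ = ?Q")
proof -
  have Q: "poly ?Q (of_nat m) = of_nat (U_spec V E m)" for m :: nat
    by (simp add: U_spec_def poly_sum poly_shifted_binomial_poly_of_nat F_spec_eq_binomial)
  show ?thesis
    unfolding redei_berge_def
  proof (rule the_equality)
    fix p :: "rat poly"
    assume "\<forall>m::nat. poly p (of_nat m) = of_nat (U_spec V E m)"
    then show "p = ?Q"
      using Q by (intro poly_eq_if_eq_on_nats) auto
  qed (use Q in blast)
qed

lemma XDes_compl_edges: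
  assumes "xs \<in> vertex_orders V"
  shows "XDes (compl_edges V E) xs = {1..<length xs} - XDes E xs"
proof -
  have xs: "distinct xs" "set xs = V"
    using assms by (auto simp: vertex_orders_def)
  have "xs ! (i - 1) \<in> V \<and> xs ! i \<in> V \<and> xs ! (i - 1) \<noteq> xs ! i" if "i \<in> {1..<length xs}" for i
  proof -
    have "i - 1 \<noteq> i" "i - 1 < length xs" "i < length xs"
      using that by auto
    then have "xs ! (i - 1) \<noteq> xs ! i"
      using nth_eq_iff_index_eq[OF xs(1)] by blast
    then show ?thesis
      using that xs(2) by auto
  qed
  then show ?thesis
    unfolding XDes_def compl_edges_def by auto
qed

lemma weak_count_XDes_compl_edges:
  assumes xs: "xs \<in> vertex_orders V"
  shows "weak_count (XDes E xs) (card V) + weak_count (XDes (compl_edges V E) xs) (card V)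
           = card V - 1"
proof -
  have "length xs = card V"
    using xs by (auto simp: vertex_orders_def distinct_card)
  then have sub: "XDes E xs \<subseteq> {1..<card V}"
    and "XDes (compl_edges V E) xs = {1..<card V} - XDes E xs"
    using XDes_compl_edges[OF xs] by (auto simp: XDes_def)
  then show ?thesis
    using weak_count_complement[OF sub] by simp
qed

lemma smult_sum_right: "smult c (sum f A) = (\<Sum>x\<in>A. smult c (f x))"
  by (induction A rule: infinite_finite_induct) (auto simp: smult_add_right)

theorem mainTheorem15:
  fixes V :: "'a set" and E :: "('a \<times> 'a) set"
  assumes "digraph V E"
  shows "pcompose (redei_berge V E) [:0, -1:]
           = smult ((-1) ^ card V) (redei_berge V (compl_edges V E))"
proof -
  let ?n = "card V"
  let ?P = "\<lambda>E xs. shifted_binomial_poly ?n (weak_count (XDes E xs) ?n) :: rat poly"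
  have fin: "finite V"
    using assms by (simp add: digraph_def)
  have "pcompose (redei_berge V E) [:0, -1:] = (\<Sum>xs \<in> vertex_orders V. pcompose (?P E xs) [:0, -1:])"
    by (simp add: redei_berge_eq_sum[OF fin] pcompose_sum)
  also have "\<dots> = (\<Sum>xs \<in> vertex_orders V. smult ((-1) ^ ?n) (?P (compl_edges V E) xs))"
    by (intro sum.cong refl shifted_binomial_poly_reflect weak_count_XDes_compl_edges)
  also have "\<dots> = smult ((-1) ^ ?n) (redei_berge V (compl_edges V E))"
    by (simp add: redei_berge_eq_sum[OF fin] smult_sum_right)
  finally show ?thesis .
qed

end
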